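(* Let $m,n,t$ be positive integers, let $p\in\mathbb{R}[x_1,\dots,x_n]$ be a form of degree $t$, let $T_p\in\mathbb{R}^{n\times\cdots\times n}$ be its associated symmetric $t$-tensor, and let $A_1,\dots,A_n\in L(\mathbb{R}^m)$ be pairwise commuting contractions. Then $$\|p\|_{\mathrm{cb}}\ge\Big\|\sum_{i_1,\dots,i_t=1}^n(T_p)_{i_1,\dots,i_t}A_{i_1}\cdots A_{i_t}\Big\|.$$
   Context: A form is a homogeneous polynomial; for $p(x)=\sum_{|\alpha|=t}c_\alpha x^\alpha$, $(T_p)_{i_1,\dots,i_t}=c_{e_{i_1}+\dots+e_{i_t}}/\tau(i_1,\dots,i_t)$ where $\tau$ is the number of distinct permutations of $(i_1,\dots,i_t)$. For a $t$-tensor $T$, $\|T\|_{\mathrm{cb}}=\sup\|\sum_{i_1,\dots,i_t}T_{i_1,\dots,i_t}U_1(i_1)\cdots U_t(i_t)\|$ over all $k$ and $k\times k$ unitaries $U_j(i)$; equivalently (by the Russo–Dye theorem) over all $k\times k$ contractions. With $(T\circ\sigma)_{i_1,\dots,i_t}=T_{i_{\sigma(1)},\dots,i_{\sigma(t)}}$, $\|p\|_{\mathrm{cb}}=\inf\{\sum_{\sigma\in S_t}\|T^\sigma\|_{\mathrm{cb}}:T_p=\sum_{\sigma\in S_t}T^\sigma\circ\sigma\}$. A contraction is a linear map of operator norm at most $1$; $\|\cdot\|$ is the operator norm. *)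

theory Defs
  imports "Jordan_Normal_Form.Matrix" "HOL-Combinatorics.Multiset_Permutations"
    "HOL-Combinatorics.Permutations" Complex_Main
begin

text \<open>Variables are indexed 0..n-1, tensor slots 0..t-1.
 A form of degree t in n variables is given by its coefficient function
 on monomials; the monomial x^alpha with alpha = e_(i_1)+...+e_(i_t) is
 encoded by the multiset of indices {i_1,...,i_t}.
 A t-tensor in R^(n x ... x n) is a function on index lists of length t
 with entries below n (values elsewhere are irrelevant).\<close>

definition is_form :: "nat \<Rightarrow> nat \<Rightarrow> (nat multiset \<Rightarrow> real) \<Rightarrow> bool" where
  "is_form n t c \<longleftrightarrow> (\<forall>a. c a \<noteq> 0 \<longrightarrow> size a = t \<and> set_mset a \<subseteq> {..<n})"

definition index_tuples :: "nat \<Rightarrow> nat \<Rightarrow> nat list set" where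
  "index_tuples n t = {is. length is = t \<and> set is \<subseteq> {..<n}}"

definition tau :: "nat list \<Rightarrow> nat" where
  "tau is = card (permutations_of_multiset (mset is))"

definition form_tensor :: "(nat multiset \<Rightarrow> real) \<Rightarrow> nat list \<Rightarrow> real" where
  "form_tensor c is = c (mset is) / real (tau is)"

definition vnorm :: "'a::real_normed_field vec \<Rightarrow> real" where
  "vnorm x = sqrt (\<Sum>i<dim_vec x. (norm (x $ i))\<^sup>2)"

definition opnorm :: "'a::real_normed_field mat \<Rightarrow> real" where
  "opnorm A = Sup {vnorm (mult_mat_vec A x) | x. x \<in> carrier_vec (dim_col A) \<and> vnorm x \<le> 1}"

definition contraction :: "'a::real_normed_field mat \<Rightarrow> bool" where
  "contraction A \<longleftrightarrow> opnorm A \<le> 1"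

definition adjoint :: "complex mat \<Rightarrow> complex mat" where
  "adjoint U = mat (dim_col U) (dim_row U) (\<lambda>(i,j). cnj (U $$ (j,i)))"

definition unitary :: "nat \<Rightarrow> complex mat \<Rightarrow> bool" where
  "unitary k U \<longleftrightarrow> U \<in> carrier_mat k k \<and> U * adjoint U = 1\<^sub>m k \<and> adjoint U * U = 1\<^sub>m k"

definition prod_mats :: "nat \<Rightarrow> 'a::semiring_1 mat list \<Rightarrow> 'a mat" where
  "prod_mats k Ms = foldr (\<lambda>M acc. M * acc) Ms (1\<^sub>m k)"

definition tensor_eval :: "nat \<Rightarrow> nat \<Rightarrow> nat \<Rightarrow> (nat list \<Rightarrow> 'a::comm_ring_1)
    \<Rightarrow> (nat \<Rightarrow> nat \<Rightarrow> 'a mat) \<Rightarrow> 'a mat" where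
  "tensor_eval n t k T M = mat k k (\<lambda>(r,s).
     \<Sum>is\<in>index_tuples n t. T is * prod_mats k (map (\<lambda>j. M j (is ! j)) [0..<t]) $$ (r,s))"

definition cb_norm :: "nat \<Rightarrow> nat \<Rightarrow> (nat list \<Rightarrow> real) \<Rightarrow> real" where
  "cb_norm n t T = Sup {opnorm (tensor_eval n t k (\<lambda>is. complex_of_real (T is)) U) | k U.
      k > 0 \<and> (\<forall>j<t. \<forall>i<n. unitary k (U j i))}"

definition tensor_perm :: "(nat list \<Rightarrow> real) \<Rightarrow> (nat \<Rightarrow> nat) \<Rightarrow> nat list \<Rightarrow> real" where
  "tensor_perm T \<sigma> is = T (map (\<lambda>j. is ! \<sigma> j) [0..<length is])"

definition form_cb_norm :: "nat \<Rightarrow> nat \<Rightarrow> (nat multiset \<Rightarrow> real) \<Rightarrow> real" where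
  "form_cb_norm n t c = Inf {(\<Sum>\<sigma>\<in>{\<sigma>. \<sigma> permutes {..<t}}. cb_norm n t (Ts \<sigma>)) | Ts.
      \<forall>is\<in>index_tuples n t.
        form_tensor c is = (\<Sum>\<sigma>\<in>{\<sigma>. \<sigma> permutes {..<t}}. tensor_perm (Ts \<sigma>) \<sigma> is)}"

end

theory Submission
  imports Defs "HOL-Analysis.L2_Norm"
begin

(*
  Fix any decomposition T_p = sum_sigma T^sigma o sigma. Since the A_i commute, the product
  A_(i_1) ... A_(i_t) depends only on the multiset of indices, so the evaluation of T_p at the A_i
  is the sum over sigma of the evaluations of T^sigma, and it suffices to bound each of them by
  the cb-norm of T^sigma.

  Every contraction A on R^m has an orthogonal dilation W on R^(3m) with top-left corner A:
  complete the orthonormal columns of [A; B], where B^T B = 1 - A^T A, to an orthogonal matrix.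
  In R^(m + 2mt) let the dilation used in tensor slot j act on the first m coordinates together
  with a private block of 2m coordinates. Applied to a vector supported on the first m
  coordinates, each factor of a product of slot dilations finds zeros in its private block, so
  the product compresses exactly to A_(i_1) ... A_(i_t). Hence the evaluation at the A_i is a
  compression of an evaluation at orthogonal, in particular unitary, matrices.
*)

section \<open>Euclidean norm and operator norm\<close>

lemma sum_lessThan_add:
  fixes f :: "nat \<Rightarrow> 'a::comm_monoid_add"
  shows "(\<Sum>p<a + b. f p) = (\<Sum>p<a. f p) + (\<Sum>l<b. f (a + l))"
  by (induction b) (auto simp: add.assoc)

lemma vnorm_eq_L2_set: "vnorm x = L2_set (\<lambda>i. norm (x $ i)) {..<dim_vec x}"
  by (simp add: vnorm_def L2_set_def)

lemma vnorm_nonneg: "0 \<le> vnorm x"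
  by (simp add: vnorm_eq_L2_set)

lemma norm_vec_nth_le_vnorm: "i < dim_vec x \<Longrightarrow> norm (x $ i) \<le> vnorm x"
  unfolding vnorm_eq_L2_set by (rule member_le_L2_set) auto

lemma vnorm_of_real_vec: "vnorm (map_vec complex_of_real v) = vnorm v"
  by (simp add: vnorm_def)

lemma vnorm_smult_vec:
  fixes x :: "'a::real_normed_field vec"
  shows "vnorm (c \<cdot>\<^sub>v x) = norm c * vnorm x"
proof -
  have "vnorm (c \<cdot>\<^sub>v x) = L2_set (\<lambda>i. norm c * norm (x $ i)) {..<dim_vec x}"
    unfolding vnorm_eq_L2_set by (auto intro!: L2_set_cong simp: norm_mult)
  then show ?thesis by (simp add: vnorm_eq_L2_set L2_set_right_distrib)
qed

lemma L2_set_sum_le: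
  assumes "finite F"
  shows "L2_set (\<lambda>i. \<Sum>a\<in>F. g a i) A \<le> (\<Sum>a\<in>F. L2_set (g a) A)"
  using assms
proof (induction F rule: finite_induct)
  case (insert x F)
  have "L2_set (\<lambda>i. g x i + (\<Sum>a\<in>F. g a i)) A \<le> L2_set (g x) A + L2_set (\<lambda>i. \<Sum>a\<in>F. g a i) A"
    by (rule L2_set_triangle_ineq)
  with insert show ?case by simp
qed (simp add: L2_set_def)

lemma vnorm_sum_le:
  fixes h :: "'b \<Rightarrow> nat \<Rightarrow> 'a::real_normed_field"
  assumes "finite F"
  shows "vnorm (vec K (\<lambda>r. \<Sum>a\<in>F. h a r)) \<le> (\<Sum>a\<in>F. vnorm (vec K (h a)))"
proof -
  have "vnorm (vec K (\<lambda>r. \<Sum>a\<in>F. h a r)) = L2_set (\<lambda>r. norm (\<Sum>a\<in>F. h a r)) {..<K}"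
    unfolding vnorm_eq_L2_set by (auto intro!: L2_set_cong)
  also have "\<dots> \<le> L2_set (\<lambda>r. \<Sum>a\<in>F. norm (h a r)) {..<K}"
    by (rule L2_set_mono) (auto intro: norm_sum)
  also have "\<dots> \<le> (\<Sum>a\<in>F. L2_set (\<lambda>r. norm (h a r)) {..<K})"
    by (rule L2_set_sum_le[OF assms])
  also have "\<dots> = (\<Sum>a\<in>F. vnorm (vec K (h a)))"
    by (intro sum.cong) (auto simp: vnorm_eq_L2_set intro!: L2_set_cong)
  finally show ?thesis .
qed

lemma mult_mat_vec_nth:
  "r < dim_row A \<Longrightarrow> dim_vec x = dim_col A \<Longrightarrow> (A *\<^sub>v x) $ r = (\<Sum>s<dim_col A. A $$ (r,s) * x $ s)"
  by (simp add: scalar_prod_def atLeast0LessThan)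

lemma vnorm_mult_mat_vec_le_entry_sum:
  fixes A :: "'a::real_normed_field mat"
  assumes x: "x \<in> carrier_vec (dim_col A)" "vnorm x \<le> 1"
  shows "vnorm (A *\<^sub>v x) \<le> (\<Sum>r<dim_row A. \<Sum>s<dim_col A. norm (A $$ (r,s)))"
proof -
  have "vnorm (A *\<^sub>v x) \<le> (\<Sum>r<dim_row A. norm ((A *\<^sub>v x) $ r))"
    unfolding vnorm_eq_L2_set dim_mult_mat_vec by (rule L2_set_le_sum) auto
  also have "\<dots> \<le> (\<Sum>r<dim_row A. \<Sum>s<dim_col A. norm (A $$ (r,s)))"
  proof (intro sum_mono)
    fix r assume r: "r \<in> {..<dim_row A}"
    have "norm ((A *\<^sub>v x) $ r) \<le> (\<Sum>s<dim_col A. norm (A $$ (r,s) * x $ s))"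
      using r x by (subst mult_mat_vec_nth) (auto intro: norm_sum)
    also have "\<dots> \<le> (\<Sum>s<dim_col A. norm (A $$ (r,s)))"
    proof (intro sum_mono)
      fix s assume "s \<in> {..<dim_col A}"
      then have "norm (x $ s) \<le> 1" using norm_vec_nth_le_vnorm[of s x] x by auto
      then show "norm (A $$ (r,s) * x $ s) \<le> norm (A $$ (r,s))"
        by (simp add: norm_mult mult_left_le)
    qed
    finally show "norm ((A *\<^sub>v x) $ r) \<le> (\<Sum>s<dim_col A. norm (A $$ (r,s)))" .
  qed
  finally show ?thesis .
qed

lemma opnorm_set_bdd_above:
  fixes A :: "'a::real_normed_field mat"
  shows "bdd_above {vnorm (A *\<^sub>v x) | x. x \<in> carrier_vec (dim_col A) \<and> vnorm x \<le> 1}"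
  unfolding bdd_above_def using vnorm_mult_mat_vec_le_entry_sum[of _ A] by blast

lemma vnorm_mult_mat_vec_le_opnorm:
  fixes A :: "'a::real_normed_field mat"
  assumes "x \<in> carrier_vec (dim_col A)" "vnorm x \<le> 1"
  shows "vnorm (A *\<^sub>v x) \<le> opnorm A"
  unfolding opnorm_def by (rule cSup_upper[OF _ opnorm_set_bdd_above]) (use assms in blast)

lemma opnorm_leI:
  fixes A :: "'a::real_normed_field mat"
  assumes "\<And>x. x \<in> carrier_vec (dim_col A) \<Longrightarrow> vnorm x \<le> 1 \<Longrightarrow> vnorm (A *\<^sub>v x) \<le> B"
  shows "opnorm A \<le> B"
proof -
  have "0\<^sub>v (dim_col A) \<in> carrier_vec (dim_col A)" "vnorm (0\<^sub>v (dim_col A) :: 'a vec) \<le> 1"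
    by (auto simp: vnorm_def)
  then show ?thesis unfolding opnorm_def
    by (intro cSup_least) (use assms in blast)+
qed

lemma contraction_vnorm_le:
  fixes A :: "real mat"
  assumes A: "A \<in> carrier_mat m m" and "contraction A" and x: "x \<in> carrier_vec m"
  shows "vnorm (A *\<^sub>v x) \<le> vnorm x"
proof (cases "vnorm x = 0")
  case True
  then have "x = 0\<^sub>v m"
    using x by (intro eq_vecI) (auto simp: vnorm_eq_L2_set L2_set_eq_0_iff)
  then show ?thesis using A by (simp add: vnorm_def)
next
  case False
  then have pos: "vnorm x > 0" using vnorm_nonneg[of x] by linarith
  define y where "y = (1 / vnorm x) \<cdot>\<^sub>v x"
  have "vnorm (A *\<^sub>v y) \<le> 1"
    using vnorm_mult_mat_vec_le_opnorm[of y A] \<open>contraction A\<close> A x pos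
    by (simp add: y_def vnorm_smult_vec contraction_def)
  moreover have "A *\<^sub>v y = (1 / vnorm x) \<cdot>\<^sub>v (A *\<^sub>v x)"
    unfolding y_def by (rule mult_mat_vec[OF A x])
  ultimately show ?thesis using pos by (simp add: vnorm_smult_vec divide_le_eq)
qed

lemma opnorm_sum_le:
  fixes M :: "'b \<Rightarrow> 'a::real_normed_field mat"
  assumes F: "finite F" and M: "\<And>a. a \<in> F \<Longrightarrow> M a \<in> carrier_mat nr nc"
  shows "opnorm (mat nr nc (\<lambda>rs. \<Sum>a\<in>F. M a $$ rs)) \<le> (\<Sum>a\<in>F. opnorm (M a))"
proof (rule opnorm_leI)
  fix x :: "'a vec"
  assume x: "x \<in> carrier_vec (dim_col (mat nr nc (\<lambda>rs. \<Sum>a\<in>F. M a $$ rs)))" and x1: "vnorm x \<le> 1"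
  have "(mat nr nc (\<lambda>rs. \<Sum>a\<in>F. M a $$ rs) *\<^sub>v x) $ r = (\<Sum>a\<in>F. (M a *\<^sub>v x) $ r)"
    if r: "r < nr" for r
  proof -
    have "(mat nr nc (\<lambda>rs. \<Sum>a\<in>F. M a $$ rs) *\<^sub>v x) $ r = (\<Sum>s<nc. \<Sum>a\<in>F. M a $$ (r,s) * x $ s)"
      using r x by (subst mult_mat_vec_nth) (auto simp: sum_distrib_right)
    also have "\<dots> = (\<Sum>a\<in>F. \<Sum>s<nc. M a $$ (r,s) * x $ s)"
      by (rule sum.swap)
    also have "\<dots> = (\<Sum>a\<in>F. (M a *\<^sub>v x) $ r)"
      using M r x by (intro sum.cong refl) (subst mult_mat_vec_nth, auto)
    finally show ?thesis .
  qed
  then have "mat nr nc (\<lambda>rs. \<Sum>a\<in>F. M a $$ rs) *\<^sub>v x = vec nr (\<lambda>r. \<Sum>a\<in>F. (M a *\<^sub>v x) $ r)"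
    by (intro eq_vecI) auto
  then have "vnorm (mat nr nc (\<lambda>rs. \<Sum>a\<in>F. M a $$ rs) *\<^sub>v x) \<le> (\<Sum>a\<in>F. vnorm (vec nr (\<lambda>r. (M a *\<^sub>v x) $ r)))"
    using vnorm_sum_le[OF F] by simp
  also have "\<dots> = (\<Sum>a\<in>F. vnorm (M a *\<^sub>v x))"
  proof (intro sum.cong refl arg_cong[where f = vnorm])
    fix a assume "a \<in> F"
    then have "M a \<in> carrier_mat nr nc" by (rule M)
    then show "vec nr (\<lambda>r. (M a *\<^sub>v x) $ r) = M a *\<^sub>v x" by (intro eq_vecI) auto
  qed
  also have "\<dots> \<le> (\<Sum>a\<in>F. opnorm (M a))"
    using M x x1 by (intro sum_mono vnorm_mult_mat_vec_le_opnorm) auto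
  finally show "vnorm (mat nr nc (\<lambda>rs. \<Sum>a\<in>F. M a $$ rs) *\<^sub>v x) \<le> (\<Sum>a\<in>F. opnorm (M a))" .
qed

definition pad_vec :: "nat \<Rightarrow> 'a::zero vec \<Rightarrow> 'a vec" where
  "pad_vec k x = vec k (\<lambda>r. if r < dim_vec x then x $ r else 0)"

lemma vnorm_pad_vec:
  assumes "dim_vec x \<le> k"
  shows "vnorm (pad_vec k x) = vnorm x"
proof -
  have "(\<Sum>r<k. (norm (pad_vec k x $ r))\<^sup>2) = (\<Sum>r<dim_vec x. (norm (x $ r))\<^sup>2)"
    using assms by (intro sum.mono_neutral_cong_right) (auto simp: pad_vec_def)
  then show ?thesis by (simp add: vnorm_def pad_vec_def)
qed

lemma opnorm_le_of_compression:
  fixes B Z :: "'a::real_normed_field mat"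
  assumes B: "B \<in> carrier_mat m m" and Z: "Z \<in> carrier_mat k k" and "m \<le> k"
    and compr: "\<And>x r. x \<in> carrier_vec m \<Longrightarrow> r < m \<Longrightarrow> (B *\<^sub>v x) $ r = (Z *\<^sub>v pad_vec k x) $ r"
  shows "opnorm B \<le> opnorm Z"
proof (rule opnorm_leI)
  fix x :: "'a vec" assume x: "x \<in> carrier_vec (dim_col B)" and x1: "vnorm x \<le> 1"
  have "(\<Sum>r<m. (norm ((B *\<^sub>v x) $ r))\<^sup>2) \<le> (\<Sum>r<k. (norm ((Z *\<^sub>v pad_vec k x) $ r))\<^sup>2)"
    using compr[of x] x B \<open>m \<le> k\<close> by (simp add: sum_mono2)
  then have "vnorm (B *\<^sub>v x) \<le> vnorm (Z *\<^sub>v pad_vec k x)"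
    using B Z by (simp add: vnorm_def)
  also have "\<dots> \<le> opnorm Z"
  proof (rule vnorm_mult_mat_vec_le_opnorm)
    show "pad_vec k x \<in> carrier_vec (dim_col Z)" using Z by (simp add: pad_vec_def)
    show "vnorm (pad_vec k x) \<le> 1" using x x1 B \<open>m \<le> k\<close> by (simp add: vnorm_pad_vec)
  qed
  finally show "vnorm (B *\<^sub>v x) \<le> opnorm Z" .
qed

section \<open>Gram factorization of positive semidefinite forms\<close>

definition quad_form :: "nat set \<Rightarrow> (nat \<Rightarrow> nat \<Rightarrow> real) \<Rightarrow> (nat \<Rightarrow> real) \<Rightarrow> real" where
  "quad_form I M x = (\<Sum>i\<in>I. \<Sum>j\<in>I. x i * M i j * x j)"

definition psd_on :: "nat set \<Rightarrow> (nat \<Rightarrow> nat \<Rightarrow> real) \<Rightarrow> bool" where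
  "psd_on I M \<longleftrightarrow> (\<forall>x. 0 \<le> quad_form I M x)"

definition symmetric_on :: "nat set \<Rightarrow> (nat \<Rightarrow> nat \<Rightarrow> real) \<Rightarrow> bool" where
  "symmetric_on I M \<longleftrightarrow> (\<forall>i\<in>I. \<forall>j\<in>I. M i j = M j i)"

lemma quad_form_restrict:
  assumes "finite I" "S \<subseteq> I" "\<And>i. i \<in> I - S \<Longrightarrow> x i = 0"
  shows "quad_form I M x = quad_form S M x"
  unfolding quad_form_def using assms
  by (intro sum.mono_neutral_cong_right) (auto intro!: sum.mono_neutral_right sum.neutral)

lemma quad_form_insert:
  assumes "finite F" "k \<notin> F" "symmetric_on (insert k F) M"
  shows "quad_form (insert k F) M y =
    y k * M k k * y k + 2 * y k * (\<Sum>j\<in>F. M k j * y j) + quad_form F M y"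
proof -
  have "quad_form (insert k F) M y = (y k * M k k * y k + (\<Sum>j\<in>F. y k * M k j * y j)) +
      ((\<Sum>i\<in>F. y i * M i k * y k) + quad_form F M y)"
    using assms(1,2) by (simp add: quad_form_def sum.distrib)
  also have "(\<Sum>j\<in>F. y k * M k j * y j) = y k * (\<Sum>j\<in>F. M k j * y j)"
    by (simp add: sum_distrib_left mult.assoc)
  also have "(\<Sum>i\<in>F. y i * M i k * y k) = y k * (\<Sum>j\<in>F. M k j * y j)"
  proof -
    have "M i k = M k i" if "i \<in> F" for i
      using assms(3) that unfolding symmetric_on_def by blast
    then show ?thesis unfolding sum_distrib_left by (intro sum.cong) auto
  qed
  finally show ?thesis by simp
qed

lemma psd_on_diag_nonneg:
  assumes "finite I" "psd_on I M" "k \<in> I"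
  shows "0 \<le> M k k"
proof -
  have "0 \<le> quad_form I M (\<lambda>j. of_bool (j = k))"
    using assms(2) by (simp add: psd_on_def)
  also have "\<dots> = quad_form {k} M (\<lambda>j. of_bool (j = k))"
    using assms by (intro quad_form_restrict) auto
  finally show ?thesis by (simp add: quad_form_def)
qed

lemma psd_on_diag_eq_0:
  assumes "finite I" "psd_on I M" "symmetric_on I M" "k \<in> I" "i \<in> I" "M k k = 0"
  shows "M i k = 0"
proof (cases "i = k")
  case False
  define x where "x j = (if j = i then - M i k else if j = k then M i i + 1 else 0)" for j
  have "0 \<le> quad_form I M x"
    using assms(2) by (simp add: psd_on_def)
  also have "quad_form I M x = quad_form {i, k} M x"
    using assms by (intro quad_form_restrict) (auto simp: x_def)
  also have "\<dots> = - (M i k * M i k * (M i i + 2))"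
  proof -
    have "M k i = M i k" using assms(3-5) by (simp add: symmetric_on_def)
    then show ?thesis using assms(6) False by (simp add: quad_form_def x_def algebra_simps)
  qed
  finally have "M i k * M i k * (M i i + 2) \<le> 0" by simp
  moreover have "M i i + 2 > 0" using psd_on_diag_nonneg[OF assms(1,2,5)] by simp
  ultimately have "(M i k)\<^sup>2 \<le> 0"
    by (simp add: power2_eq_square mult_le_0_iff)
  then show ?thesis by simp
qed (use assms in simp)

text \<open>Eliminating the pivot \<open>k\<close> leaves the Schur complement, which is again positive semidefinite:
  evaluate the form at \<open>x\<close> extended by \<open>-s/M k k\<close>. For \<open>M k k = 0\<close> both sides degenerate
  consistently because division by zero yields zero.\<close>
lemma psd_on_schur_complement:
  assumes F: "finite F" "k \<notin> F" and sym: "symmetric_on (insert k F) M"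
    and psd: "psd_on (insert k F) M"
  shows "psd_on F (\<lambda>i j. M i j - M i k * M k j / M k k)"
  unfolding psd_on_def
proof
  fix x :: "nat \<Rightarrow> real"
  define a where "a = M k k"
  define s where "s = (\<Sum>j\<in>F. M k j * x j)"
  define y where "y j = (if j = k then - s / a else x j)" for j
  have "M i k = M k i" if "i \<in> F" for i
    using sym that unfolding symmetric_on_def by blast
  then have s_sym: "(\<Sum>i\<in>F. x i * M i k) = s"
    unfolding s_def by (intro sum.cong) auto
  have "quad_form F (\<lambda>i j. M i j - M i k * M k j / a) x =
      quad_form F M x - (\<Sum>i\<in>F. x i * M i k) * (\<Sum>j\<in>F. M k j * x j) / a"
    by (simp add: quad_form_def sum_product sum_divide_distrib algebra_simps sum_subtractf)
  also have "\<dots> = quad_form F M x - s * s / a"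
    using s_sym s_def by simp
  also have "\<dots> = quad_form (insert k F) M y"
  proof -
    have yF: "quad_form F M y = quad_form F M x" "(\<Sum>j\<in>F. M k j * y j) = s"
      using F unfolding quad_form_def s_def y_def by (auto intro!: sum.cong)
    show ?thesis
      unfolding quad_form_insert[OF F sym] yF
      by (cases "a = 0") (simp_all add: y_def a_def field_simps power2_eq_square)
  qed
  also have "\<dots> \<ge> 0" using psd by (simp add: psd_on_def)
  finally show "0 \<le> quad_form F (\<lambda>i j. M i j - M i k * M k j / M k k) x"
    by (simp add: a_def)
qed

lemma psd_on_gram_factor:
  assumes "finite I" "symmetric_on I M" "psd_on I M"
  shows "\<exists>b. \<forall>i\<in>I. \<forall>j\<in>I. (\<Sum>l\<in>I. b i l * b j l) = M i j"
  using assms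
proof (induction I arbitrary: M rule: finite_induct)
  case (insert k F)
  define a where "a = M k k"
  have a: "0 \<le> a" "sqrt a * sqrt a = a"
    using psd_on_diag_nonneg[OF _ insert.prems(2)] insert.hyps by (simp_all add: a_def)
  have sym: "M i j = M j i" if "i \<in> insert k F" "j \<in> insert k F" for i j
    using insert.prems(1) that unfolding symmetric_on_def by blast
  define M' where "M' i j = M i j - M i k * M k j / a" for i j
  have "symmetric_on F M'"
    using sym by (auto simp: symmetric_on_def M'_def mult.commute)
  moreover have "psd_on F M'"
    unfolding M'_def a_def by (rule psd_on_schur_complement) (use insert in auto)
  ultimately obtain b' where b': "\<And>i j. i \<in> F \<Longrightarrow> j \<in> F \<Longrightarrow> (\<Sum>l\<in>F. b' i l * b' j l) = M' i j"
    using insert.IH by blast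
  define b where "b i l = (if l = k then M i k / sqrt a else if i = k then 0 else b' i l)" for i l
  have pivot_column: "M i k * M j k / a = M i j" if "i = k \<or> j = k" "i \<in> insert k F" "j \<in> insert k F" for i j
  proof (cases "a = 0")
    case True
    then have "M i k = 0" "M j k = 0"
      using psd_on_diag_eq_0[OF _ insert.prems(2,1)] insert.hyps that by (auto simp: a_def)
    then show ?thesis using that sym by auto
  next
    case False
    then show ?thesis using that sym by (auto simp: a_def)
  qed
  have "(\<Sum>l\<in>insert k F. b i l * b j l) = M i j" if "i \<in> insert k F" "j \<in> insert k F" for i j
  proof -
    have "(\<Sum>l\<in>insert k F. b i l * b j l) = M i k * M j k / a + (\<Sum>l\<in>F. b i l * b j l)"
      using insert.hyps a by (simp add: b_def)
    also have "\<dots> = M i j"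
    proof (cases "i = k \<or> j = k")
      case True
      have "(\<Sum>l\<in>F. b i l * b j l) = 0"
        using True insert.hyps by (intro sum.neutral) (auto simp: b_def)
      then show ?thesis using pivot_column[OF True that] by simp
    next
      case False
      then have "(\<Sum>l\<in>F. b i l * b j l) = (\<Sum>l\<in>F. b' i l * b' j l)"
        using insert.hyps by (intro sum.cong) (auto simp: b_def)
      also have "\<dots> = M' i j"
        using that False by (intro b') auto
      finally have "(\<Sum>l\<in>F. b i l * b j l) = M' i j" .
      then show ?thesis using False that sym[of j k] by (simp add: M'_def mult.commute)
    qed
    finally show ?thesis .
  qed
  then show ?case by blast
qed simp

lemma quad_form_diff:
  "quad_form I (\<lambda>i j. M i j - N i j) x = quad_form I M x - quad_form I N x"
  unfolding quad_form_def sum_subtractf[symmetric] by (intro sum.cong refl) (simp add: algebra_simps)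

lemma quad_form_identity: "quad_form {..<m} (\<lambda>i j. of_bool (i = j)) z = (\<Sum>i<m. z i * z i)"
proof -
  have "(\<Sum>j<m. z i * of_bool (i = j) * z j) = z i * z i" if "i < m" for i
  proof -
    have "(\<Sum>j<m. z i * of_bool (i = j) * z j) = (\<Sum>j<m. if i = j then z i * z j else 0)"
      by (intro sum.cong) auto
    then show ?thesis using that by simp
  qed
  then show ?thesis unfolding quad_form_def by (intro sum.cong) auto
qed

lemma vnorm_sq_real: "(vnorm x)\<^sup>2 = (\<Sum>i<dim_vec x. x $ i * x $ i)"
  for x :: "real vec"
  unfolding vnorm_def by (simp add: sum_nonneg power2_eq_square)

lemma quad_form_gram:
  fixes A :: "real mat"
  assumes A: "A \<in> carrier_mat m m" and x: "x \<in> carrier_vec m"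
  shows "quad_form {..<m} (\<lambda>i j. \<Sum>l<m. A $$ (l,i) * A $$ (l,j)) (\<lambda>i. x $ i) = (vnorm (A *\<^sub>v x))\<^sup>2"
proof -
  have "quad_form {..<m} (\<lambda>i j. \<Sum>l<m. A $$ (l,i) * A $$ (l,j)) (\<lambda>i. x $ i) =
      (\<Sum>i<m. \<Sum>j<m. \<Sum>l<m. (A $$ (l,i) * x $ i) * (A $$ (l,j) * x $ j))"
    unfolding quad_form_def sum_distrib_left sum_distrib_right by (simp add: mult_ac)
  also have "\<dots> = (\<Sum>i<m. \<Sum>l<m. \<Sum>j<m. (A $$ (l,i) * x $ i) * (A $$ (l,j) * x $ j))"
    by (intro sum.cong refl sum.swap)
  also have "\<dots> = (\<Sum>l<m. \<Sum>i<m. \<Sum>j<m. (A $$ (l,i) * x $ i) * (A $$ (l,j) * x $ j))"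
    by (rule sum.swap)
  also have "\<dots> = (\<Sum>l<m. (A *\<^sub>v x) $ l * (A *\<^sub>v x) $ l)"
  proof (intro sum.cong refl)
    fix l assume "l \<in> {..<m}"
    then have "(A *\<^sub>v x) $ l = (\<Sum>i<m. A $$ (l,i) * x $ i)"
      using A x by (subst mult_mat_vec_nth) auto
    then show "(\<Sum>i<m. \<Sum>j<m. (A $$ (l,i) * x $ i) * (A $$ (l,j) * x $ j)) = (A *\<^sub>v x) $ l * (A *\<^sub>v x) $ l"
      by (simp add: sum_product)
  qed
  also have "\<dots> = (vnorm (A *\<^sub>v x))\<^sup>2"
    using A by (simp only: vnorm_sq_real dim_mult_mat_vec carrier_matD)
  finally show ?thesis .
qed

lemma contraction_defect_psd:
  fixes A :: "real mat"
  assumes A: "A \<in> carrier_mat m m" and "contraction A"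
  shows "psd_on {..<m} (\<lambda>i j. of_bool (i = j) - (\<Sum>l<m. A $$ (l,i) * A $$ (l,j)))"
  unfolding psd_on_def quad_form_diff
proof
  fix z :: "nat \<Rightarrow> real"
  define x where "x = vec m z"
  have x: "x \<in> carrier_vec m" by (simp add: x_def)
  have "quad_form {..<m} (\<lambda>i j. \<Sum>l<m. A $$ (l,i) * A $$ (l,j)) z = (vnorm (A *\<^sub>v x))\<^sup>2"
    using quad_form_gram[OF A x] unfolding quad_form_def x_def by simp
  also have "\<dots> \<le> (vnorm x)\<^sup>2"
    using contraction_vnorm_le[OF A \<open>contraction A\<close> x] vnorm_nonneg by (rule power_mono)
  also have "\<dots> = quad_form {..<m} (\<lambda>i j. of_bool (i = j)) z"
    by (simp add: quad_form_identity vnorm_sq_real x_def)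
  finally show "0 \<le> quad_form {..<m} (\<lambda>i j. of_bool (i = j)) z -
      quad_form {..<m} (\<lambda>i j. \<Sum>l<m. A $$ (l,i) * A $$ (l,j)) z" by simp
qed

section \<open>Orthogonal dilation of a contraction\<close>

definition orth_mat :: "nat \<Rightarrow> real mat \<Rightarrow> bool" where
  "orth_mat k W \<longleftrightarrow>
     W \<in> carrier_mat k k \<and> W * transpose_mat W = 1\<^sub>m k \<and> transpose_mat W * W = 1\<^sub>m k"

lemma isometry_complement_projection:
  fixes V :: "real mat"
  assumes V: "V \<in> carrier_mat n m" and VtV: "transpose_mat V * V = 1\<^sub>m m"
  defines "Q \<equiv> 1\<^sub>m n - V * transpose_mat V"
  shows "Q \<in> carrier_mat n n" "transpose_mat Q = Q" "Q * Q = Q"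
    "Q * V = 0\<^sub>m n m" "transpose_mat V * Q = 0\<^sub>m m n" "V * transpose_mat V + Q = 1\<^sub>m n"
proof -
  have Vt: "transpose_mat V \<in> carrier_mat m n" using V by simp
  define P where "P = V * transpose_mat V"
  have P: "P \<in> carrier_mat n n" using V by (simp add: P_def)
  have Q_P: "Q = 1\<^sub>m n - P" by (simp add: Q_def P_def)
  have PV: "P * V = V"
    unfolding P_def using V Vt by (simp add: assoc_mult_mat[OF V Vt V] VtV)
  have VtP: "transpose_mat V * P = transpose_mat V"
    unfolding P_def using V Vt by (simp add: assoc_mult_mat[OF Vt V Vt, symmetric] VtV)
  have PP: "P * P = P"
    using assoc_mult_mat[OF V Vt P] VtP by (simp add: P_def)
  show Q: "Q \<in> carrier_mat n n" using P by (simp add: Q_P minus_carrier_mat)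
  have "transpose_mat P = P" unfolding P_def using V by (simp add: transpose_mult[OF V Vt])
  then show "transpose_mat Q = Q"
    unfolding Q_P using transpose_minus[OF one_carrier_mat P] by simp
  show "Q * V = 0\<^sub>m n m"
    unfolding Q_P using P V by (simp add: minus_mult_distrib_mat[OF _ P V] PV)
  show "transpose_mat V * Q = 0\<^sub>m m n"
    unfolding Q_P using P Vt by (simp add: mult_minus_distrib_mat[OF Vt _ P] VtP)
  have "Q * P = 0\<^sub>m n n"
    unfolding Q_P using P by (simp add: minus_mult_distrib_mat[OF one_carrier_mat P P] PP)
  then have "Q * Q = Q - 0\<^sub>m n n"
    using mult_minus_distrib_mat[OF Q one_carrier_mat P] Q by (simp add: Q_P[symmetric])
  then show "Q * Q = Q"
    using Q by (auto intro!: eq_matI)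
  show "V * transpose_mat V + Q = 1\<^sub>m n"
    using P by (auto simp: Q_P P_def[symmetric] intro!: eq_matI)
qed

lemma orthogonal_completion_of_isometry:
  fixes V :: "real mat"
  assumes V: "V \<in> carrier_mat n m" and VtV: "transpose_mat V * V = 1\<^sub>m m"
  shows "orth_mat (n + m) (four_block_mat V (1\<^sub>m n - V * transpose_mat V) (0\<^sub>m m m) (transpose_mat V))"
proof -
  define Q where "Q = 1\<^sub>m n - V * transpose_mat V"
  define W where "W = four_block_mat V Q (0\<^sub>m m m) (transpose_mat V)"
  note proj = isometry_complement_projection[OF V VtV, folded Q_def]
  have Vt: "transpose_mat V \<in> carrier_mat m n" using V by simp
  have W: "W \<in> carrier_mat (n + m) (n + m)"
    unfolding W_def using V Vt proj(1) by (subst add.commute) simp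
  have tW: "transpose_mat W = four_block_mat (transpose_mat V) (0\<^sub>m m m) Q V"
    unfolding W_def using V Vt proj(1,2) by (subst transpose_four_block_mat) auto
  have "W * transpose_mat W = four_block_mat (V * transpose_mat V + Q * Q) (V * 0\<^sub>m m m + Q * V)
      (0\<^sub>m m m * transpose_mat V + transpose_mat V * Q) (0\<^sub>m m m * 0\<^sub>m m m + transpose_mat V * V)"
    unfolding tW by (unfold W_def, rule mult_four_block_mat) (use V Vt proj(1) in auto)
  also have "\<dots> = 1\<^sub>m (n + m)"
    using V Vt proj VtV by simp
  finally have left: "W * transpose_mat W = 1\<^sub>m (n + m)" .
  have "transpose_mat W * W = four_block_mat (transpose_mat V * V + 0\<^sub>m m m * 0\<^sub>m m m)
      (transpose_mat V * Q + 0\<^sub>m m m * transpose_mat V) (Q * V + V * 0\<^sub>m m m) (Q * Q + V * transpose_mat V)"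
    unfolding tW by (unfold W_def, rule mult_four_block_mat) (use V Vt proj(1) in auto)
  also have "\<dots> = 1\<^sub>m (m + n)"
    using V Vt proj VtV comm_add_mat[OF proj(1), of "V * transpose_mat V"] by simp
  finally show ?thesis
    using W left by (simp add: orth_mat_def W_def Q_def add.commute[of m n])
qed

lemma contraction_orthogonal_dilation:
  fixes A :: "real mat"
  assumes A: "A \<in> carrier_mat m m" and c: "contraction A"
  shows "\<exists>W. orth_mat (3 * m) W \<and> (\<forall>r<m. \<forall>s<m. W $$ (r,s) = A $$ (r,s))"
proof -
  define N where "N = (\<lambda>i j. of_bool (i = j) - (\<Sum>l<m. A $$ (l,i) * A $$ (l,j)))"
  have "symmetric_on {..<m} N"
    unfolding N_def symmetric_on_def by (auto simp: mult.commute)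
  then obtain b where b: "\<And>i j. i < m \<Longrightarrow> j < m \<Longrightarrow> (\<Sum>l<m. b i l * b j l) = N i j"
    using psd_on_gram_factor[of "{..<m}" N] contraction_defect_psd[OF A c, folded N_def] by fastforce
  define V where "V = mat (2 * m) m (\<lambda>(p,j). if p < m then A $$ (p,j) else b j (p - m))"
  have V: "V \<in> carrier_mat (2 * m) m" by (simp add: V_def)
  have "transpose_mat V * V = 1\<^sub>m m"
  proof (rule eq_matI)
    fix i j assume "i < dim_row (1\<^sub>m m :: real mat)" "j < dim_col (1\<^sub>m m :: real mat)"
    then have i: "i < m" and j: "j < m" by auto
    have "(transpose_mat V * V) $$ (i,j) = (\<Sum>p<m + m. V $$ (p,i) * V $$ (p,j))"
      using V i j by (simp add: scalar_prod_def atLeast0LessThan mult_2)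
    also have "\<dots> = (\<Sum>p<m. A $$ (p,i) * A $$ (p,j)) + (\<Sum>l<m. b i l * b j l)"
      using i j by (simp add: sum_lessThan_add V_def)
    also have "\<dots> = 1\<^sub>m m $$ (i,j)"
      using b i j by (simp add: N_def)
    finally show "(transpose_mat V * V) $$ (i,j) = 1\<^sub>m m $$ (i,j)" .
  qed (use V in auto)
  from orthogonal_completion_of_isometry[OF V this]
  have "orth_mat (3 * m) (four_block_mat V (1\<^sub>m (2 * m) - V * transpose_mat V) (0\<^sub>m m m) (transpose_mat V))"
    by (simp add: numeral_3_eq_3)
  moreover have "\<forall>r<m. \<forall>s<m. four_block_mat V (1\<^sub>m (2 * m) - V * transpose_mat V) (0\<^sub>m m m) (transpose_mat V) $$ (r,s) = A $$ (r,s)"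
    using V by (simp add: V_def)
  ultimately show ?thesis by blast
qed

section \<open>Embedding a matrix along an injection of indices\<close>

definition embed_mat :: "nat \<Rightarrow> nat \<Rightarrow> (nat \<Rightarrow> nat) \<Rightarrow> 'a::zero_neq_one mat \<Rightarrow> 'a mat" where
  "embed_mat k d f W = mat k k (\<lambda>(r,s). if r \<in> f ` {..<d} \<and> s \<in> f ` {..<d}
     then W $$ (the_inv_into {..<d} f r, the_inv_into {..<d} f s) else of_bool (r = s))"

lemma dim_embed_mat [simp]:
  "dim_row (embed_mat k d f W) = k" "dim_col (embed_mat k d f W) = k"
  by (simp_all add: embed_mat_def)

lemma embed_mat_carrier: "embed_mat k d f W \<in> carrier_mat k k"
  by (simp add: carrier_matI)

lemma transpose_embed_mat:
  assumes "W \<in> carrier_mat d d" "inj_on f {..<d}"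
  shows "transpose_mat (embed_mat k d f W) = embed_mat k d f (transpose_mat W)"
  by (rule eq_matI) (use assms in \<open>auto simp: embed_mat_def the_inv_into_f_f\<close>)

lemma embed_mat_mult_vec_nth:
  fixes W :: "'a::comm_ring_1 mat"
  assumes inj: "inj_on f {..<d}" and img: "f ` {..<d} \<subseteq> {..<k}"
    and y: "y \<in> carrier_vec k" and r: "r < k"
  shows "(embed_mat k d f W *\<^sub>v y) $ r = (if r \<in> f ` {..<d}
      then (\<Sum>p<d. W $$ (the_inv_into {..<d} f r, p) * y $ f p) else y $ r)"
proof -
  let ?U = "embed_mat k d f W"
  have e: "(?U *\<^sub>v y) $ r = (\<Sum>q<k. ?U $$ (r,q) * y $ q)"
    using r y by (subst mult_mat_vec_nth) (auto simp: embed_mat_def)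
  show ?thesis
  proof (cases "r \<in> f ` {..<d}")
    case True
    have "(\<Sum>q<k. ?U $$ (r,q) * y $ q) = (\<Sum>q\<in>f ` {..<d}. ?U $$ (r,q) * y $ q)"
      using True r img by (intro sum.mono_neutral_right) (auto simp: embed_mat_def)
    also have "\<dots> = (\<Sum>p<d. ?U $$ (r, f p) * y $ f p)"
      by (rule sum.reindex[OF inj, unfolded comp_def])
    also have "\<dots> = (\<Sum>p<d. W $$ (the_inv_into {..<d} f r, p) * y $ f p)"
      using True r img inj by (intro sum.cong refl) (auto simp: embed_mat_def the_inv_into_f_f)
    finally show ?thesis using e True by simp
  next
    case False
    have "(\<Sum>q<k. ?U $$ (r,q) * y $ q) = (\<Sum>q\<in>{r}. ?U $$ (r,q) * y $ q)"
      using False r by (intro sum.mono_neutral_right) (auto simp: embed_mat_def)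
    then show ?thesis using e False r by (simp add: embed_mat_def)
  qed
qed

lemma embed_mat_mult:
  fixes W1 W2 :: "'a::comm_ring_1 mat"
  assumes inj: "inj_on f {..<d}" and img: "f ` {..<d} \<subseteq> {..<k}"
    and W1: "W1 \<in> carrier_mat d d" and W2: "W2 \<in> carrier_mat d d"
  shows "embed_mat k d f W1 * embed_mat k d f W2 = embed_mat k d f (W1 * W2)"
proof (rule eq_matI)
  let ?I = "f ` {..<d}" and ?g = "the_inv_into {..<d} f"
  fix r s assume "r < dim_row (embed_mat k d f (W1 * W2))" "s < dim_col (embed_mat k d f (W1 * W2))"
  then have r: "r < k" and s: "s < k" by (auto simp: embed_mat_def)
  let ?c = "col (embed_mat k d f W2) s"
  have c: "?c \<in> carrier_vec k" by (rule col_carrier_vec[OF s embed_mat_carrier])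
  have c_img: "?c $ f p = (if s \<in> ?I then W2 $$ (p, ?g s) else 0)" if "p < d" for p
  proof -
    have "f p < k" "f p \<in> ?I" using that img by auto
    then show ?thesis using s inj that by (auto simp: embed_mat_def the_inv_into_f_f)
  qed
  have "(embed_mat k d f W1 * embed_mat k d f W2) $$ (r,s) = (embed_mat k d f W1 *\<^sub>v ?c) $ r"
    using r s by simp
  also have "\<dots> = embed_mat k d f (W1 * W2) $$ (r,s)"
  proof (cases "r \<in> ?I")
    case rI: True
    then have gr: "?g r < d" using the_inv_into_into[OF inj] by blast
    have "(embed_mat k d f W1 *\<^sub>v ?c) $ r = (\<Sum>p<d. W1 $$ (?g r, p) * ?c $ f p)"
      using embed_mat_mult_vec_nth[OF inj img c r] rI by simp
    also have "\<dots> = (if s \<in> ?I then (W1 * W2) $$ (?g r, ?g s) else 0)"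
    proof (cases "s \<in> ?I")
      case True
      then have "?g s < d" using the_inv_into_into[OF inj] by blast
      then have "(W1 * W2) $$ (?g r, ?g s) = (\<Sum>p<d. W1 $$ (?g r, p) * W2 $$ (p, ?g s))"
        using gr W1 W2 by (simp add: scalar_prod_def atLeast0LessThan)
      then show ?thesis
        using True c_img by simp
    qed (simp add: c_img)
    also have "\<dots> = embed_mat k d f (W1 * W2) $$ (r,s)"
      using rI r s by (auto simp: embed_mat_def)
    finally show ?thesis .
  next
    case False
    then have "(embed_mat k d f W1 *\<^sub>v ?c) $ r = embed_mat k d f W2 $$ (r,s)"
      using embed_mat_mult_vec_nth[OF inj img c r] r s by simp
    then show ?thesis
      using False r s by (simp add: embed_mat_def)
  qed
  finally show "(embed_mat k d f W1 * embed_mat k d f W2) $$ (r,s) = embed_mat k d f (W1 * W2) $$ (r,s)" .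
qed simp_all

lemma embed_mat_one:
  assumes "inj_on f {..<d}"
  shows "embed_mat k d f (1\<^sub>m d) = 1\<^sub>m k"
  using assms by (intro eq_matI) (auto simp: embed_mat_def the_inv_into_f_f inj_on_the_inv_into)

lemma orthogonal_embed_mat:
  assumes inj: "inj_on f {..<d}" and img: "f ` {..<d} \<subseteq> {..<k}" and W: "orth_mat d W"
  shows "orth_mat k (embed_mat k d f W)"
proof -
  have Wc: "W \<in> carrier_mat d d" and Wt: "transpose_mat W \<in> carrier_mat d d"
    using W by (auto simp: orth_mat_def)
  show ?thesis
    using W embed_mat_mult[OF inj img Wc Wt] embed_mat_mult[OF inj img Wt Wc] embed_mat_one[OF inj]
    by (simp add: orth_mat_def embed_mat_carrier transpose_embed_mat[OF Wc inj])
qed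

section \<open>Compressing products of dilations placed in separate slots\<close>

lemma prod_mats_carrier:
  "(\<And>M. M \<in> set Ms \<Longrightarrow> M \<in> carrier_mat k k) \<Longrightarrow> prod_mats k Ms \<in> carrier_mat k k"
  unfolding prod_mats_def by (induction Ms) (auto intro!: mult_carrier_mat[of _ k k])

lemma prod_mats_Cons: "prod_mats k (M # Ms) = M * prod_mats k Ms"
  by (simp add: prod_mats_def)

text \<open>As the private coordinate sets \<open>G j\<close> are disjoint, each factor of the product still
  finds zeros in its own.\<close>
lemma prod_mats_compression:
  fixes U B :: "nat \<Rightarrow> 'a::comm_ring_1 mat" and G :: "nat \<Rightarrow> nat set"
  assumes U: "\<And>j. j \<in> set js \<Longrightarrow> U j \<in> carrier_mat k k"
    and B: "\<And>j. j \<in> set js \<Longrightarrow> B j \<in> carrier_mat m m"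
    and G: "\<And>j. j \<in> set js \<Longrightarrow> G j \<subseteq> {m..<k}"
    and disj: "\<And>i j. i \<in> set js \<Longrightarrow> j \<in> set js \<Longrightarrow> i \<noteq> j \<Longrightarrow> G i \<inter> G j = {}"
    and act: "\<And>j y. j \<in> set js \<Longrightarrow> y \<in> carrier_vec k \<Longrightarrow> (\<forall>r\<in>G j. y $ r = 0) \<Longrightarrow>
        vec_first (U j *\<^sub>v y) m = B j *\<^sub>v vec_first y m \<and>
        (\<forall>r\<in>{m..<k} - G j. (U j *\<^sub>v y) $ r = y $ r)"
    and "distinct js" and y: "y \<in> carrier_vec k" and y0: "\<forall>j\<in>set js. \<forall>r\<in>G j. y $ r = 0"
  shows "vec_first (prod_mats k (map U js) *\<^sub>v y) m = prod_mats m (map B js) *\<^sub>v vec_first y m \<and>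
    (\<forall>r\<in>{m..<k} - (\<Union>j\<in>set js. G j). (prod_mats k (map U js) *\<^sub>v y) $ r = y $ r)"
  using assms
proof (induction js)
  case Nil
  have "vec_first y m = 1\<^sub>m m *\<^sub>v vec_first y m" by simp
  then show ?case using Nil.prems(7) by (simp add: prod_mats_def)
next
  case (Cons j js)
  let ?PU = "prod_mats k (map U js)" and ?PB = "prod_mats m (map B js)"
  have PU: "?PU \<in> carrier_mat k k" by (rule prod_mats_carrier) (use Cons.prems(1) in auto)
  have PB: "?PB \<in> carrier_mat m m" by (rule prod_mats_carrier) (use Cons.prems(2) in auto)
  have IH: "vec_first (?PU *\<^sub>v y) m = ?PB *\<^sub>v vec_first y m"
    "\<forall>r\<in>{m..<k} - (\<Union>j\<in>set js. G j). (?PU *\<^sub>v y) $ r = y $ r"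
    using Cons.IH Cons.prems by auto
  define z where "z = ?PU *\<^sub>v y"
  have z: "z \<in> carrier_vec k" using PU Cons.prems(7) by (simp add: z_def)
  have "r \<notin> (\<Union>i\<in>set js. G i)" if "r \<in> G j" for r
    using Cons.prems(4)[of j] Cons.prems(6) that by fastforce
  then have "\<forall>r\<in>G j. z $ r = 0"
    using IH(2) Cons.prems(3)[of j] Cons.prems(8) by (fastforce simp: z_def)
  then have actj: "vec_first (U j *\<^sub>v z) m = B j *\<^sub>v vec_first z m"
    "\<forall>r\<in>{m..<k} - G j. (U j *\<^sub>v z) $ r = z $ r"
    using Cons.prems(5)[of j z] z by auto
  have Uj: "U j \<in> carrier_mat k k" and Bj: "B j \<in> carrier_mat m m"
    using Cons.prems(1,2) by auto
  have prod: "prod_mats k (map U (j # js)) *\<^sub>v y = U j *\<^sub>v z"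
    using assoc_mult_mat_vec[OF Uj PU Cons.prems(7)] by (simp add: prod_mats_Cons z_def)
  have prodB: "prod_mats m (map B (j # js)) *\<^sub>v vec_first y m = B j *\<^sub>v vec_first z m"
    using assoc_mult_mat_vec[OF Bj PB, of "vec_first y m"] IH(1) by (simp add: prod_mats_Cons z_def)
  show ?case
  proof
    show "vec_first (prod_mats k (map U (j # js)) *\<^sub>v y) m = prod_mats m (map B (j # js)) *\<^sub>v vec_first y m"
      unfolding prod prodB by (rule actj(1))
    show "\<forall>r\<in>{m..<k} - (\<Union>i\<in>set (j # js). G i). (prod_mats k (map U (j # js)) *\<^sub>v y) $ r = y $ r"
      unfolding prod using actj(2) IH(2) by (auto simp: z_def)
  qed
qed

definition slot_index :: "nat \<Rightarrow> nat \<Rightarrow> nat \<Rightarrow> nat" where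
  "slot_index m l p = (if p < m then p else p + 2 * m * l)"

definition slot_block :: "nat \<Rightarrow> nat \<Rightarrow> nat set" where
  "slot_block m l = {m + 2 * m * l..<m + 2 * m * Suc l}"

lemma inj_on_slot_index: "inj_on (slot_index m l) A"
  by (auto simp: inj_on_def slot_index_def split: if_splits)

lemma slot_index_image: "slot_index m l ` {..<3 * m} = {..<m} \<union> slot_block m l"
proof
  show "slot_index m l ` {..<3 * m} \<subseteq> {..<m} \<union> slot_block m l"
    by (auto simp: slot_index_def slot_block_def)
  have "r = slot_index m l r" if "r < m" for r
    using that by (simp add: slot_index_def)
  moreover have "r = slot_index m l (r - 2 * m * l)" if "r \<in> slot_block m l" for r
    using that by (auto simp: slot_index_def slot_block_def)
  ultimately show "{..<m} \<union> slot_block m l \<subseteq> slot_index m l ` {..<3 * m}"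
    by (force simp: slot_block_def)
qed

lemma slot_block_subset:
  assumes "l < t"
  shows "slot_block m l \<subseteq> {m..<m + 2 * m * t}"
proof -
  have "2 * m * Suc l \<le> 2 * m * t" using assms by (intro mult_le_mono2) simp
  then show ?thesis by (auto simp: slot_block_def)
qed

lemma slot_block_disjoint:
  assumes "i \<noteq> j"
  shows "slot_block m i \<inter> slot_block m j = {}"
proof -
  have "slot_block m i \<inter> slot_block m j = {}" if "i < j" for i j
  proof -
    have "2 * m * Suc i \<le> 2 * m * j" using that by (intro mult_le_mono2) simp
    then show ?thesis by (auto simp: slot_block_def)
  qed
  then show ?thesis using assms by (metis inf_commute nat_neq_iff)
qed

lemma slot_dilation_action:
  fixes W A :: "'a::comm_ring_1 mat" and m t :: nat
  defines "k \<equiv> m + 2 * m * t"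
  assumes l: "l < t" and W: "W \<in> carrier_mat (3 * m) (3 * m)" and A: "A \<in> carrier_mat m m"
    and corner: "\<forall>r<m. \<forall>s<m. W $$ (r,s) = A $$ (r,s)"
    and y: "y \<in> carrier_vec k" and y0: "\<forall>r\<in>slot_block m l. y $ r = 0"
  shows "vec_first (embed_mat k (3 * m) (slot_index m l) W *\<^sub>v y) m = A *\<^sub>v vec_first y m \<and>
    (\<forall>r\<in>{m..<k} - slot_block m l. (embed_mat k (3 * m) (slot_index m l) W *\<^sub>v y) $ r = y $ r)"
proof -
  let ?U = "embed_mat k (3 * m) (slot_index m l) W"
  have img: "slot_index m l ` {..<3 * m} \<subseteq> {..<k}"
    using slot_block_subset[OF l, of m] unfolding slot_index_image k_def by auto
  note action = embed_mat_mult_vec_nth[OF inj_on_slot_index img y]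
  have first: "(?U *\<^sub>v y) $ r = (A *\<^sub>v vec_first y m) $ r" if r: "r < m" for r
  proof -
    have "the_inv_into {..<3 * m} (slot_index m l) r = r"
      using r by (intro the_inv_into_f_eq[OF inj_on_slot_index]) (auto simp: slot_index_def)
    then have "(?U *\<^sub>v y) $ r = (\<Sum>p<m + 2 * m. W $$ (r, p) * y $ slot_index m l p)"
      using action r slot_index_image k_def by auto
    also have "\<dots> = (\<Sum>p<m. W $$ (r, p) * y $ slot_index m l p) +
        (\<Sum>q<2 * m. W $$ (r, m + q) * y $ slot_index m l (m + q))"
      by (rule sum_lessThan_add)
    also have "(\<Sum>q<2 * m. W $$ (r, m + q) * y $ slot_index m l (m + q)) = 0"
    proof (intro sum.neutral ballI)
      fix q assume "q \<in> {..<2 * m}"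
      then have "slot_index m l (m + q) \<in> slot_block m l"
        by (auto simp: slot_index_def slot_block_def)
      then show "W $$ (r, m + q) * y $ slot_index m l (m + q) = 0" using y0 by simp
    qed
    also have "(\<Sum>p<m. W $$ (r, p) * y $ slot_index m l p) = (\<Sum>p<m. W $$ (r, p) * y $ p)"
      by (simp add: slot_index_def)
    also have "\<dots> = (A *\<^sub>v vec_first y m) $ r"
      using r corner A by (subst mult_mat_vec_nth) (auto simp: vec_first_def)
    finally show ?thesis by simp
  qed
  have "vec_first (?U *\<^sub>v y) m = A *\<^sub>v vec_first y m"
  proof (rule eq_vecI)
    fix r assume "r < dim_vec (A *\<^sub>v vec_first y m)"
    then have r: "r < m" using A by simp
    have "vec_first (?U *\<^sub>v y) m $ r = (?U *\<^sub>v y) $ r"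
      using r by (simp add: vec_first_def)
    also have "\<dots> = (A *\<^sub>v vec_first y m) $ r"
      by (rule first[OF r])
    finally show "vec_first (?U *\<^sub>v y) m $ r = (A *\<^sub>v vec_first y m) $ r" .
  qed (use A in simp)
  moreover have "(?U *\<^sub>v y) $ r = y $ r" if "r \<in> {m..<k} - slot_block m l" for r
    using action that slot_index_image by auto
  ultimately show ?thesis by blast
qed

lemma index_tuples_nth: "is \<in> index_tuples n t \<Longrightarrow> j < t \<Longrightarrow> is ! j < n"
  unfolding index_tuples_def using nth_mem by fastforce

lemma slot_product_compression:
  fixes A W :: "nat \<Rightarrow> 'a::comm_ring_1 mat" and m t :: nat
  defines "k \<equiv> m + 2 * m * t"
  assumes A: "\<And>i. i < n \<Longrightarrow> A i \<in> carrier_mat m m"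
    and W: "\<And>i. i < n \<Longrightarrow> W i \<in> carrier_mat (3 * m) (3 * m)"
    and corner: "\<And>i. i < n \<Longrightarrow> \<forall>r<m. \<forall>s<m. W i $$ (r,s) = A i $$ (r,s)"
    and "is": "is \<in> index_tuples n t" and x: "x \<in> carrier_vec m"
  shows "vec_first (prod_mats k (map (\<lambda>j. embed_mat k (3 * m) (slot_index m j) (W (is ! j))) [0..<t])
      *\<^sub>v pad_vec k x) m = prod_mats m (map (\<lambda>j. A (is ! j)) [0..<t]) *\<^sub>v x"
proof -
  have nth: "is ! j < n" if "j \<in> set [0..<t]" for j
    using index_tuples_nth[OF "is"] that by simp
  have "vec_first (prod_mats k (map (\<lambda>j. embed_mat k (3 * m) (slot_index m j) (W (is ! j))) [0..<t])
      *\<^sub>v pad_vec k x) m = prod_mats m (map (\<lambda>j. A (is ! j)) [0..<t]) *\<^sub>v vec_first (pad_vec k x) m"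
  proof (rule conjunct1[OF prod_mats_compression[where G = "slot_block m"]])
    show "\<And>j y. j \<in> set [0..<t] \<Longrightarrow> y \<in> carrier_vec k \<Longrightarrow> \<forall>r\<in>slot_block m j. y $ r = 0 \<Longrightarrow>
        vec_first (embed_mat k (3 * m) (slot_index m j) (W (is ! j)) *\<^sub>v y) m = A (is ! j) *\<^sub>v vec_first y m \<and>
        (\<forall>r\<in>{m..<k} - slot_block m j. (embed_mat k (3 * m) (slot_index m j) (W (is ! j)) *\<^sub>v y) $ r = y $ r)"
      unfolding k_def using nth W A corner by (intro slot_dilation_action) auto
    show "\<forall>j\<in>set [0..<t]. \<forall>r\<in>slot_block m j. pad_vec k x $ r = 0"
    proof (intro ballI)
      fix j r assume "j \<in> set [0..<t]" "r \<in> slot_block m j"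
      then have "r \<in> {m..<k}" using slot_block_subset[of j t m] by (auto simp: k_def)
      then show "pad_vec k x $ r = 0" using x by (simp add: pad_vec_def)
    qed
    show "\<And>j. j \<in> set [0..<t] \<Longrightarrow> slot_block m j \<subseteq> {m..<k}"
      unfolding k_def by (rule slot_block_subset) simp
    show "\<And>i j. i \<noteq> j \<Longrightarrow> slot_block m i \<inter> slot_block m j = {}"
      by (rule slot_block_disjoint)
    show "\<And>j. j \<in> set [0..<t] \<Longrightarrow> A (is ! j) \<in> carrier_mat m m"
      using A nth by blast
  qed (simp_all add: embed_mat_carrier pad_vec_def)
  moreover have "vec_first (pad_vec k x) m = x"
    using x by (auto simp: vec_first_def pad_vec_def k_def)
  ultimately show ?thesis by simp
qed

section \<open>Tensor evaluations and the completely bounded norm\<close>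

lemma finite_index_tuples: "finite (index_tuples n t)"
proof -
  have "index_tuples n t = {xs. set xs \<subseteq> {..<n} \<and> length xs = t}"
    by (auto simp: index_tuples_def)
  then show ?thesis using finite_lists_length_eq[of "{..<n}" t] by simp
qed

lemma prod_mats_tuple_carrier:
  assumes "\<forall>j<t. \<forall>i<n. M j i \<in> carrier_mat k k" "is \<in> index_tuples n t"
  shows "prod_mats k (map (\<lambda>j. M j (is ! j)) [0..<t]) \<in> carrier_mat k k"
  by (rule prod_mats_carrier) (use assms index_tuples_nth in auto)

lemma tensor_eval_mult_vec_nth:
  fixes T :: "nat list \<Rightarrow> 'a::comm_ring_1"
  assumes M: "\<forall>j<t. \<forall>i<n. M j i \<in> carrier_mat k k" and x: "x \<in> carrier_vec k" and r: "r < k"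
  shows "(tensor_eval n t k T M *\<^sub>v x) $ r =
    (\<Sum>is\<in>index_tuples n t. T is * (prod_mats k (map (\<lambda>j. M j (is ! j)) [0..<t]) *\<^sub>v x) $ r)"
proof -
  let ?P = "\<lambda>is. prod_mats k (map (\<lambda>j. M j (is ! j)) [0..<t])"
  have "(tensor_eval n t k T M *\<^sub>v x) $ r = (\<Sum>s<k. \<Sum>is\<in>index_tuples n t. T is * ?P is $$ (r,s) * x $ s)"
    using r x by (subst mult_mat_vec_nth) (auto simp: tensor_eval_def sum_distrib_right)
  also have "\<dots> = (\<Sum>is\<in>index_tuples n t. \<Sum>s<k. T is * ?P is $$ (r,s) * x $ s)"
    by (rule sum.swap)
  also have "\<dots> = (\<Sum>is\<in>index_tuples n t. T is * (?P is *\<^sub>v x) $ r)"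
  proof (intro sum.cong refl)
    fix xs assume "xs \<in> index_tuples n t"
    then have "?P xs \<in> carrier_mat k k" by (rule prod_mats_tuple_carrier[OF M])
    then have "(?P xs *\<^sub>v x) $ r = (\<Sum>s<k. ?P xs $$ (r,s) * x $ s)"
      using r x by (subst mult_mat_vec_nth) auto
    then show "(\<Sum>s<k. T xs * ?P xs $$ (r,s) * x $ s) = T xs * (?P xs *\<^sub>v x) $ r"
      by (simp add: sum_distrib_left mult.assoc)
  qed
  finally show ?thesis .
qed

lemma vnorm_mult_mat_vec_unitary:
  assumes U: "unitary k U" and x: "x \<in> carrier_vec k"
  shows "vnorm (U *\<^sub>v x) = vnorm x"
proof -
  have Uc: "U \<in> carrier_mat k k" using U by (simp add: unitary_def)
  have Ux: "(U *\<^sub>v x) $ r = (\<Sum>s<k. U $$ (r,s) * x $ s)" if "r < k" for r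
    using that Uc x by (subst mult_mat_vec_nth) auto
  have orth: "(\<Sum>r<k. cnj (U $$ (r,s')) * U $$ (r,s)) = of_bool (s' = s)" if "s < k" "s' < k" for s s'
  proof -
    have "(\<Sum>r<k. cnj (U $$ (r,s')) * U $$ (r,s)) = (adjoint U * U) $$ (s', s)"
      using that Uc by (simp add: adjoint_def scalar_prod_def atLeast0LessThan)
    also have "\<dots> = of_bool (s' = s)"
      using U that by (simp add: unitary_def)
    finally show ?thesis .
  qed
  have "complex_of_real (\<Sum>r<k. (norm ((U *\<^sub>v x) $ r))\<^sup>2) = (\<Sum>r<k. (U *\<^sub>v x) $ r * cnj ((U *\<^sub>v x) $ r))"
    by (simp only: of_real_sum complex_norm_square)
  also have "\<dots> = (\<Sum>r<k. \<Sum>s<k. \<Sum>s'<k. (x $ s * cnj (x $ s')) * (cnj (U $$ (r,s')) * U $$ (r,s)))"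
    by (intro sum.cong refl) (simp add: Ux sum_product mult_ac)
  also have "\<dots> = (\<Sum>s<k. \<Sum>r<k. \<Sum>s'<k. (x $ s * cnj (x $ s')) * (cnj (U $$ (r,s')) * U $$ (r,s)))"
    by (rule sum.swap)
  also have "\<dots> = (\<Sum>s<k. \<Sum>s'<k. \<Sum>r<k. (x $ s * cnj (x $ s')) * (cnj (U $$ (r,s')) * U $$ (r,s)))"
    by (intro sum.cong refl sum.swap)
  also have "\<dots> = (\<Sum>s<k. \<Sum>s'<k. (x $ s * cnj (x $ s')) * (\<Sum>r<k. cnj (U $$ (r,s')) * U $$ (r,s)))"
    by (simp add: sum_distrib_left)
  also have "\<dots> = (\<Sum>s<k. x $ s * cnj (x $ s))"
  proof (intro sum.cong refl)
    fix s assume "s \<in> {..<k}"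
    then have "(\<Sum>s'<k. (x $ s * cnj (x $ s')) * (\<Sum>r<k. cnj (U $$ (r,s')) * U $$ (r,s))) =
        (\<Sum>s'<k. if s' = s then x $ s * cnj (x $ s) else 0)"
      by (intro sum.cong refl) (auto simp: orth)
    then show "(\<Sum>s'<k. (x $ s * cnj (x $ s')) * (\<Sum>r<k. cnj (U $$ (r,s')) * U $$ (r,s))) = x $ s * cnj (x $ s)"
      using \<open>s \<in> {..<k}\<close> by simp
  qed
  also have "\<dots> = complex_of_real (\<Sum>s<k. (norm (x $ s))\<^sup>2)"
    by (simp only: of_real_sum complex_norm_square)
  finally have "(\<Sum>r<k. (norm ((U *\<^sub>v x) $ r))\<^sup>2) = (\<Sum>s<k. (norm (x $ s))\<^sup>2)"
    using of_real_eq_iff by blast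
  then show ?thesis using Uc x by (simp add: vnorm_def)
qed

lemma vnorm_prod_mats_unitary:
  "(\<And>U. U \<in> set Us \<Longrightarrow> unitary k U) \<Longrightarrow> x \<in> carrier_vec k \<Longrightarrow> vnorm (prod_mats k Us *\<^sub>v x) = vnorm x"
proof (induction Us)
  case (Cons U Us)
  have Uc: "U \<in> carrier_mat k k" using Cons.prems(1) by (simp add: unitary_def)
  have P: "prod_mats k Us \<in> carrier_mat k k"
    using Cons.prems(1) by (intro prod_mats_carrier) (auto simp: unitary_def)
  have "prod_mats k (U # Us) *\<^sub>v x = U *\<^sub>v (prod_mats k Us *\<^sub>v x)"
    using assoc_mult_mat_vec[OF Uc P Cons.prems(2)] by (simp add: prod_mats_Cons)
  also have "vnorm \<dots> = vnorm (prod_mats k Us *\<^sub>v x)"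
    using Cons.prems P by (intro vnorm_mult_mat_vec_unitary) auto
  finally show ?case using Cons by simp
qed (simp add: prod_mats_def)

text \<open>A crude bound independent of the size \<open>k\<close>; it makes the supremum in \<open>cb_norm\<close> finite.\<close>
lemma opnorm_tensor_eval_unitary_le:
  fixes T :: "nat list \<Rightarrow> real"
  assumes U: "\<forall>j<t. \<forall>i<n. unitary k (U j i)"
  shows "opnorm (tensor_eval n t k (\<lambda>is. complex_of_real (T is)) U) \<le> (\<Sum>is\<in>index_tuples n t. \<bar>T is\<bar>)"
proof -
  let ?P = "\<lambda>is. prod_mats k (map (\<lambda>j. U j (is ! j)) [0..<t])"
  have Uc: "\<forall>j<t. \<forall>i<n. U j i \<in> carrier_mat k k" using U by (simp add: unitary_def)
  have P: "?P is \<in> carrier_mat k k" if "is \<in> index_tuples n t" for "is"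
    by (rule prod_mats_tuple_carrier[OF Uc that])
  have "tensor_eval n t k (\<lambda>is. complex_of_real (T is)) U =
      mat k k (\<lambda>rs. \<Sum>is\<in>index_tuples n t. (complex_of_real (T is) \<cdot>\<^sub>m ?P is) $$ rs)"
  proof (intro eq_matI)
    fix r s assume "r < dim_row (mat k k (\<lambda>rs. \<Sum>is\<in>index_tuples n t. (complex_of_real (T is) \<cdot>\<^sub>m ?P is) $$ rs))"
      "s < dim_col (mat k k (\<lambda>rs. \<Sum>is\<in>index_tuples n t. (complex_of_real (T is) \<cdot>\<^sub>m ?P is) $$ rs))"
    then have rs: "r < k" "s < k" by auto
    have "complex_of_real (T is) * ?P is $$ (r,s) = (complex_of_real (T is) \<cdot>\<^sub>m ?P is) $$ (r,s)"
      if "is \<in> index_tuples n t" for "is"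
      using P[OF that] rs by simp
    then show "tensor_eval n t k (\<lambda>is. complex_of_real (T is)) U $$ (r,s) =
        mat k k (\<lambda>rs. \<Sum>is\<in>index_tuples n t. (complex_of_real (T is) \<cdot>\<^sub>m ?P is) $$ rs) $$ (r,s)"
      using rs by (simp add: tensor_eval_def)
  qed (simp_all add: tensor_eval_def)
  also have "opnorm \<dots> \<le> (\<Sum>is\<in>index_tuples n t. opnorm (complex_of_real (T is) \<cdot>\<^sub>m ?P is))"
    using P by (intro opnorm_sum_le[OF finite_index_tuples]) simp
  also have "\<dots> \<le> (\<Sum>is\<in>index_tuples n t. \<bar>T is\<bar>)"
  proof (intro sum_mono opnorm_leI)
    fix "is" and x :: "complex vec" assume "is": "is \<in> index_tuples n t"
      and x: "x \<in> carrier_vec (dim_col (complex_of_real (T is) \<cdot>\<^sub>m ?P is))" and x1: "vnorm x \<le> 1"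
    have "(complex_of_real (T is) \<cdot>\<^sub>m ?P is) *\<^sub>v x = complex_of_real (T is) \<cdot>\<^sub>v (?P is *\<^sub>v x)"
      using P[OF "is"] x by (intro eq_vecI) (auto simp: scalar_prod_def sum_distrib_left mult.assoc)
    then have "vnorm ((complex_of_real (T is) \<cdot>\<^sub>m ?P is) *\<^sub>v x) = \<bar>T is\<bar> * vnorm (?P is *\<^sub>v x)"
      by (simp add: vnorm_smult_vec)
    also have "vnorm (?P is *\<^sub>v x) = vnorm x"
      using U "is" x P[OF "is"] index_tuples_nth by (intro vnorm_prod_mats_unitary) auto
    finally show "vnorm ((complex_of_real (T is) \<cdot>\<^sub>m ?P is) *\<^sub>v x) \<le> \<bar>T is\<bar>"
      using x1 by (simp add: mult_left_le)
  qed
  finally show ?thesis .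
qed

lemma opnorm_tensor_eval_le_cb_norm:
  fixes T :: "nat list \<Rightarrow> real"
  assumes "k > 0" "\<forall>j<t. \<forall>i<n. unitary k (U j i)"
  shows "opnorm (tensor_eval n t k (\<lambda>is. complex_of_real (T is)) U) \<le> cb_norm n t T"
  unfolding cb_norm_def
proof (rule cSup_upper)
  show "bdd_above {opnorm (tensor_eval n t k (\<lambda>is. complex_of_real (T is)) U) | k U.
      k > 0 \<and> (\<forall>j<t. \<forall>i<n. unitary k (U j i))}"
    unfolding bdd_above_def using opnorm_tensor_eval_unitary_le by blast
qed (use assms in blast)

lemma prod_mats_of_real:
  "(\<And>M. M \<in> set Ms \<Longrightarrow> M \<in> carrier_mat k k) \<Longrightarrow>
    prod_mats k (map of_real_hom.mat_hom Ms) = of_real_hom.mat_hom (prod_mats k Ms)"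
proof (induction Ms)
  case (Cons M Ms)
  have "prod_mats k Ms \<in> carrier_mat k k" using Cons.prems by (intro prod_mats_carrier) auto
  then show ?case using Cons by (simp add: prod_mats_Cons of_real_hom.mat_hom_mult[of _ k k _ k])
qed (simp add: prod_mats_def of_real_hom.mat_hom_one)

lemma tensor_eval_of_real:
  assumes U: "\<forall>j<t. \<forall>i<n. U j i \<in> carrier_mat k k"
  shows "tensor_eval n t k (\<lambda>is. complex_of_real (S is)) (\<lambda>j i. of_real_hom.mat_hom (U j i)) = of_real_hom.mat_hom (tensor_eval n t k S U)"
proof -
  have hom: "prod_mats k (map (\<lambda>j. of_real_hom.mat_hom (U j (is ! j))) [0..<t]) = of_real_hom.mat_hom (prod_mats k (map (\<lambda>j. U j (is ! j)) [0..<t]))"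
    if "is \<in> index_tuples n t" for "is"
  proof -
    have "prod_mats k (map of_real_hom.mat_hom (map (\<lambda>j. U j (is ! j)) [0..<t])) =
        of_real_hom.mat_hom (prod_mats k (map (\<lambda>j. U j (is ! j)) [0..<t]))"
      by (rule prod_mats_of_real) (use U that index_tuples_nth in auto)
    then show ?thesis by (simp add: comp_def)
  qed
  have carrier: "prod_mats k (map (\<lambda>j. U j (is ! j)) [0..<t]) \<in> carrier_mat k k"
    if "is \<in> index_tuples n t" for "is"
    by (rule prod_mats_tuple_carrier[OF U that])
  have entry: "prod_mats k (map (\<lambda>j. of_real_hom.mat_hom (U j (is ! j))) [0..<t]) $$ (r,s) =
      complex_of_real (prod_mats k (map (\<lambda>j. U j (is ! j)) [0..<t]) $$ (r,s))"
    if "is \<in> index_tuples n t" "r < k" "s < k" for "is" r s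
    unfolding hom[OF that(1)] using carrier[OF that(1)] that(2,3) by simp
  show ?thesis
    by (intro eq_matI) (auto simp: tensor_eval_def entry of_real_sum intro!: sum.cong)
qed

lemma unitary_of_real_orthogonal:
  assumes "orth_mat k R"
  shows "unitary k (of_real_hom.mat_hom R)"
proof -
  have R: "R \<in> carrier_mat k k" and Rt: "transpose_mat R \<in> carrier_mat k k"
    using assms by (auto simp: orth_mat_def)
  have "adjoint (of_real_hom.mat_hom R) = of_real_hom.mat_hom (transpose_mat R)"
    by (intro eq_matI) (auto simp: adjoint_def)
  then show ?thesis
    using assms R by (simp add: unitary_def orth_mat_def of_real_hom.mat_hom_one
        of_real_hom.mat_hom_mult[OF R Rt, symmetric] of_real_hom.mat_hom_mult[OF Rt R, symmetric])
qed

lemma opnorm_le_opnorm_of_real: "opnorm R \<le> opnorm (of_real_hom.mat_hom R :: complex mat)"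
proof (rule opnorm_leI)
  fix x :: "real vec" assume x: "x \<in> carrier_vec (dim_col R)" and x1: "vnorm x \<le> 1"
  have "vnorm (R *\<^sub>v x) = vnorm (of_real_hom.mat_hom R *\<^sub>v (of_real_hom.vec_hom x :: complex vec))"
    unfolding of_real_hom.mult_mat_vec_hom[OF carrier_mat_triv x, symmetric] by (simp add: vnorm_def)
  also have "\<dots> \<le> opnorm (of_real_hom.mat_hom R :: complex mat)"
    using x x1 by (intro vnorm_mult_mat_vec_le_opnorm) (auto simp: vnorm_of_real_vec)
  finally show "vnorm (R *\<^sub>v x) \<le> opnorm (of_real_hom.mat_hom R :: complex mat)" .
qed

lemma opnorm_tensor_eval_contraction_le_cb_norm:
  fixes A :: "nat \<Rightarrow> real mat" and S :: "nat list \<Rightarrow> real"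
  assumes m: "m > 0" and A: "\<And>i. i < n \<Longrightarrow> A i \<in> carrier_mat m m"
    and c: "\<And>i. i < n \<Longrightarrow> contraction (A i)"
  shows "opnorm (tensor_eval n t m S (\<lambda>_ i. A i)) \<le> cb_norm n t S"
proof -
  obtain W where W: "\<And>i. i < n \<Longrightarrow> orth_mat (3 * m) (W i) \<and> (\<forall>r<m. \<forall>s<m. W i $$ (r,s) = A i $$ (r,s))"
    using contraction_orthogonal_dilation[OF A c] by metis
  define k where "k = m + 2 * m * t"
  define U where "U j i = embed_mat k (3 * m) (slot_index m j) (W i)" for j i
  have U: "orth_mat k (U j i)" if "j < t" "i < n" for j i
    unfolding U_def
  proof (rule orthogonal_embed_mat[OF inj_on_slot_index])
    show "slot_index m j ` {..<3 * m} \<subseteq> {..<k}"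
      using slot_block_subset[OF \<open>j < t\<close>, of m] unfolding slot_index_image k_def by auto
  qed (use W that in blast)
  then have Uc: "\<forall>j<t. \<forall>i<n. U j i \<in> carrier_mat k k" by (simp add: orth_mat_def)
  have "opnorm (tensor_eval n t m S (\<lambda>_ i. A i)) \<le> opnorm (tensor_eval n t k S U)"
  proof (rule opnorm_le_of_compression)
    fix x :: "real vec" and r assume x: "x \<in> carrier_vec m" and r: "r < m"
    have compress: "(prod_mats m (map (\<lambda>j. A (is ! j)) [0..<t]) *\<^sub>v x) $ r =
        (prod_mats k (map (\<lambda>j. U j (is ! j)) [0..<t]) *\<^sub>v pad_vec k x) $ r" if "is \<in> index_tuples n t" for "is"
    proof -
      have "vec_first (prod_mats k (map (\<lambda>j. U j (is ! j)) [0..<t]) *\<^sub>v pad_vec k x) m =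
          prod_mats m (map (\<lambda>j. A (is ! j)) [0..<t]) *\<^sub>v x"
        unfolding U_def k_def
        by (rule slot_product_compression[where A = A and W = W]) (use A W that x in \<open>auto simp: orth_mat_def\<close>)
      from arg_cong[where f = "\<lambda>v. v $ r", OF this] show ?thesis
        using r by (simp add: vec_first_def)
    qed
    show "(tensor_eval n t m S (\<lambda>_ i. A i) *\<^sub>v x) $ r = (tensor_eval n t k S U *\<^sub>v pad_vec k x) $ r"
      using A x r Uc by (simp add: tensor_eval_mult_vec_nth compress k_def pad_vec_def)
  qed (use m in \<open>auto simp: tensor_eval_def k_def\<close>)
  also have "\<dots> \<le> opnorm (tensor_eval n t k (\<lambda>is. complex_of_real (S is)) (\<lambda>j i. of_real_hom.mat_hom (U j i)))"
    using opnorm_le_opnorm_of_real tensor_eval_of_real[OF Uc] by metis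
  also have "\<dots> \<le> cb_norm n t S"
    using m U by (intro opnorm_tensor_eval_le_cb_norm) (auto simp: k_def intro: unitary_of_real_orthogonal)
  finally show ?thesis .
qed

section \<open>Symmetrization under commuting matrices\<close>

lemma prod_mats_append:
  assumes "set Ms \<subseteq> carrier_mat k k" "set Ns \<subseteq> carrier_mat k k"
  shows "prod_mats k (Ms @ Ns) = prod_mats k Ms * prod_mats k Ns"
  using assms
proof (induction Ms)
  case Nil
  then have "prod_mats k Ns \<in> carrier_mat k k" by (intro prod_mats_carrier) auto
  then show ?case by (simp add: prod_mats_def)
next
  case (Cons M Ms)
  have "M \<in> carrier_mat k k" "prod_mats k Ms \<in> carrier_mat k k" "prod_mats k Ns \<in> carrier_mat k k"
    using Cons.prems by (auto intro!: prod_mats_carrier)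
  then show ?case using Cons by (simp add: prod_mats_Cons assoc_mult_mat)
qed

lemma prod_mats_commute:
  assumes S: "S \<subseteq> carrier_mat k k" and comm: "\<And>a b. a \<in> S \<Longrightarrow> b \<in> S \<Longrightarrow> a * b = b * a"
    and "a \<in> S" "set Ms \<subseteq> S"
  shows "a * prod_mats k Ms = prod_mats k Ms * a"
  using \<open>set Ms \<subseteq> S\<close>
proof (induction Ms)
  case Nil
  then show ?case using \<open>a \<in> S\<close> S by (auto simp: prod_mats_def)
next
  case (Cons M Ms)
  have a: "a \<in> carrier_mat k k" and M: "M \<in> carrier_mat k k" and P: "prod_mats k Ms \<in> carrier_mat k k"
    using \<open>a \<in> S\<close> S Cons.prems by (auto intro!: prod_mats_carrier)
  have "a * (M * prod_mats k Ms) = M * (a * prod_mats k Ms)"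
    using comm[OF \<open>a \<in> S\<close>, of M] Cons.prems
    by (simp add: assoc_mult_mat[OF a M P, symmetric] assoc_mult_mat[OF M a P])
  also have "\<dots> = (M * prod_mats k Ms) * a"
    using Cons by (simp add: assoc_mult_mat[OF M P a])
  finally show ?case by (simp add: prod_mats_Cons)
qed

lemma prod_mats_mset_eq:
  assumes S: "S \<subseteq> carrier_mat k k" and comm: "\<And>a b. a \<in> S \<Longrightarrow> b \<in> S \<Longrightarrow> a * b = b * a"
  shows "set Ms \<subseteq> S \<Longrightarrow> mset Ms = mset Ns \<Longrightarrow> prod_mats k Ms = prod_mats k Ns"
proof (induction Ms arbitrary: Ns)
  case (Cons M Ms)
  have set_eq: "set (M # Ms) = set Ns" by (rule mset_eq_setD[OF Cons.prems(2)])
  then obtain Ns1 Ns2 where Ns: "Ns = Ns1 @ M # Ns2" by (metis list.set_intros(1) split_list)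
  have "set Ns \<subseteq> S" using Cons.prems(1) unfolding set_eq[symmetric] .
  then have sets: "set Ns1 \<subseteq> S" "set Ns2 \<subseteq> S" "M \<in> S" using Ns by auto
  have carr: "M \<in> carrier_mat k k" "prod_mats k Ns1 \<in> carrier_mat k k" "prod_mats k Ns2 \<in> carrier_mat k k"
    using sets S by (auto intro!: prod_mats_carrier)
  have "set Ns1 \<subseteq> carrier_mat k k" "set (M # Ns2) \<subseteq> carrier_mat k k" "set Ns2 \<subseteq> carrier_mat k k"
    using sets S by auto
  then have "prod_mats k Ns = prod_mats k Ns1 * (M * prod_mats k Ns2)"
    unfolding Ns by (simp add: prod_mats_append prod_mats_Cons)
  also have "\<dots> = (prod_mats k Ns1 * M) * prod_mats k Ns2"
    using carr by (simp add: assoc_mult_mat)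
  also have "\<dots> = M * (prod_mats k Ns1 * prod_mats k Ns2)"
    using carr by (simp add: prod_mats_commute[OF S comm sets(3,1), symmetric] assoc_mult_mat)
  also have "prod_mats k Ns1 * prod_mats k Ns2 = prod_mats k Ms"
    using prod_mats_append[of Ns1 k Ns2] sets S Cons.IH[of "Ns1 @ Ns2"] Cons.prems Ns by auto
  finally show ?case by (simp add: prod_mats_Cons)
qed simp

lemma permute_list_index_tuples:
  assumes "\<sigma> permutes {..<t}" "is \<in> index_tuples n t"
  shows "permute_list \<sigma> is \<in> index_tuples n t"
  using assms by (simp add: index_tuples_def)

lemma bij_betw_permute_list_index_tuples:
  assumes perm: "\<sigma> permutes {..<t}"
  shows "bij_betw (permute_list \<sigma>) (index_tuples n t) (index_tuples n t)"
proof (rule bij_betw_byWitness[where f' = "permute_list (inv_into UNIV \<sigma>)"])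
  have perm_inv: "inv_into UNIV \<sigma> permutes {..<t}" by (rule permutes_inv[OF perm])
  show "\<forall>is\<in>index_tuples n t. permute_list (inv_into UNIV \<sigma>) (permute_list \<sigma> is) = is"
    using perm perm_inv by (auto simp: index_tuples_def permute_list_compose[symmetric] permutes_inv_o)
  show "\<forall>is\<in>index_tuples n t. permute_list \<sigma> (permute_list (inv_into UNIV \<sigma>) is) = is"
    using perm_inv perm by (auto simp: index_tuples_def permute_list_compose[symmetric] permutes_inv_o)
  show "permute_list \<sigma> ` index_tuples n t \<subseteq> index_tuples n t"
    using permute_list_index_tuples[OF perm] by auto
  show "permute_list (inv_into UNIV \<sigma>) ` index_tuples n t \<subseteq> index_tuples n t"
    using permute_list_index_tuples[OF perm_inv] by auto
qed

lemma tensor_eval_decomposition: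
  fixes A :: "nat \<Rightarrow> 'a::comm_ring_1 mat"
  assumes A: "\<And>i. i < n \<Longrightarrow> A i \<in> carrier_mat m m"
    and comm: "\<And>i j. i < n \<Longrightarrow> j < n \<Longrightarrow> A i * A j = A j * A i"
    and dec: "\<forall>is\<in>index_tuples n t. S is = (\<Sum>\<sigma>\<in>{\<sigma>. \<sigma> permutes {..<t}}. T \<sigma> (permute_list \<sigma> is))"
  shows "tensor_eval n t m S (\<lambda>_ i. A i) =
    mat m m (\<lambda>rs. \<Sum>\<sigma>\<in>{\<sigma>. \<sigma> permutes {..<t}}. tensor_eval n t m (T \<sigma>) (\<lambda>_ i. A i) $$ rs)"
proof -
  let ?P = "\<lambda>is. prod_mats m (map (\<lambda>j. A (is ! j)) [0..<t])"
  have P_perm: "?P (permute_list \<sigma> is) = ?P is" if "\<sigma> permutes {..<t}" "is \<in> index_tuples n t" for \<sigma> "is"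
  proof -
    have len: "length is = t" using that(2) by (simp add: index_tuples_def)
    have "map (\<lambda>j. A (is' ! j)) [0..<t] = map A is'" if "length is' = t" for is'
      using that by (intro nth_equalityI) auto
    moreover have "prod_mats m (map A (permute_list \<sigma> is)) = prod_mats m (map A is)"
      using that A comm len
      by (intro prod_mats_mset_eq[where S = "A ` {..<n}"]) (auto simp: index_tuples_def)
    ultimately show ?thesis using len by simp
  qed
  have "(\<Sum>is\<in>index_tuples n t. S is * ?P is $$ rs) =
      (\<Sum>\<sigma>\<in>{\<sigma>. \<sigma> permutes {..<t}}. \<Sum>is\<in>index_tuples n t. T \<sigma> is * ?P is $$ rs)" for rs
  proof -
    have "(\<Sum>is\<in>index_tuples n t. S is * ?P is $$ rs) =
        (\<Sum>is\<in>index_tuples n t. \<Sum>\<sigma>\<in>{\<sigma>. \<sigma> permutes {..<t}}. T \<sigma> (permute_list \<sigma> is) * ?P is $$ rs)"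
      using dec by (simp add: sum_distrib_right)
    also have "\<dots> = (\<Sum>\<sigma>\<in>{\<sigma>. \<sigma> permutes {..<t}}. \<Sum>is\<in>index_tuples n t. T \<sigma> (permute_list \<sigma> is) * ?P is $$ rs)"
      by (rule sum.swap)
    also have "\<dots> = (\<Sum>\<sigma>\<in>{\<sigma>. \<sigma> permutes {..<t}}. \<Sum>is\<in>index_tuples n t. T \<sigma> (permute_list \<sigma> is) * ?P (permute_list \<sigma> is) $$ rs)"
      by (intro sum.cong refl) (simp add: P_perm)
    also have "\<dots> = (\<Sum>\<sigma>\<in>{\<sigma>. \<sigma> permutes {..<t}}. \<Sum>is\<in>index_tuples n t. T \<sigma> is * ?P is $$ rs)"
    proof (rule sum.cong[OF refl])
      fix \<sigma> assume "\<sigma> \<in> {\<sigma>. \<sigma> permutes {..<t}}"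
      then show "(\<Sum>is\<in>index_tuples n t. T \<sigma> (permute_list \<sigma> is) * ?P (permute_list \<sigma> is) $$ rs) =
          (\<Sum>is\<in>index_tuples n t. T \<sigma> is * ?P is $$ rs)"
        using sum.reindex_bij_betw[OF bij_betw_permute_list_index_tuples, where g = "\<lambda>is. T \<sigma> is * ?P is $$ rs"]
        by simp
    qed
    finally show ?thesis .
  qed
  then show ?thesis
    by (intro eq_matI) (simp_all add: tensor_eval_def)
qed

lemma tensor_perm_eq: "tensor_perm T \<sigma> is = T (permute_list \<sigma> is)"
  by (simp add: tensor_perm_def permute_list_def)

lemma form_tensor_permute_list:
  assumes "\<sigma> permutes {..<t}" "is \<in> index_tuples n t"
  shows "form_tensor c (permute_list \<sigma> is) = form_tensor c is"
  using assms by (simp add: form_tensor_def tau_def index_tuples_def)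

lemma form_tensor_decomposition_exists:
  "\<exists>Ts. \<forall>is\<in>index_tuples n t.
     form_tensor c is = (\<Sum>\<sigma>\<in>{\<sigma>. \<sigma> permutes {..<t}}. tensor_perm (Ts \<sigma>) \<sigma> is)"
proof (intro exI ballI)
  fix "is" assume "is": "is \<in> index_tuples n t"
  have "(\<Sum>\<sigma>\<in>{\<sigma>. \<sigma> permutes {..<t}}. tensor_perm (\<lambda>is. form_tensor c is / fact t) \<sigma> is) =
      (\<Sum>\<sigma>\<in>{\<sigma>. \<sigma> permutes {..<t}}. form_tensor c is / fact t)"
    using "is" by (intro sum.cong) (auto simp: tensor_perm_eq form_tensor_permute_list)
  also have "\<dots> = form_tensor c is"
    by (simp add: card_permutations)
  finally show "form_tensor c is =
      (\<Sum>\<sigma>\<in>{\<sigma>. \<sigma> permutes {..<t}}. tensor_perm (\<lambda>is. form_tensor c is / fact t) \<sigma> is)" by simp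
qed

lemma opnorm_tensor_eval_le_decomposition:
  fixes A :: "nat \<Rightarrow> real mat"
  assumes m: "m > 0" and A: "\<And>i. i < n \<Longrightarrow> A i \<in> carrier_mat m m"
    and c: "\<And>i. i < n \<Longrightarrow> contraction (A i)"
    and comm: "\<And>i j. i < n \<Longrightarrow> j < n \<Longrightarrow> A i * A j = A j * A i"
    and dec: "\<forall>is\<in>index_tuples n t. S is = (\<Sum>\<sigma>\<in>{\<sigma>. \<sigma> permutes {..<t}}. tensor_perm (Ts \<sigma>) \<sigma> is)"
  shows "opnorm (tensor_eval n t m S (\<lambda>_ i. A i)) \<le> (\<Sum>\<sigma>\<in>{\<sigma>. \<sigma> permutes {..<t}}. cb_norm n t (Ts \<sigma>))"
proof -
  have "tensor_eval n t m S (\<lambda>_ i. A i) =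
      mat m m (\<lambda>rs. \<Sum>\<sigma>\<in>{\<sigma>. \<sigma> permutes {..<t}}. tensor_eval n t m (Ts \<sigma>) (\<lambda>_ i. A i) $$ rs)"
    using dec by (intro tensor_eval_decomposition[OF A comm]) (simp_all add: tensor_perm_eq)
  also have "opnorm \<dots> \<le> (\<Sum>\<sigma>\<in>{\<sigma>. \<sigma> permutes {..<t}}. opnorm (tensor_eval n t m (Ts \<sigma>) (\<lambda>_ i. A i)))"
    by (rule opnorm_sum_le) (auto simp: finite_permutations tensor_eval_def)
  also have "\<dots> \<le> (\<Sum>\<sigma>\<in>{\<sigma>. \<sigma> permutes {..<t}}. cb_norm n t (Ts \<sigma>))"
    by (intro sum_mono opnorm_tensor_eval_contraction_le_cb_norm[OF m A c])
  finally show ?thesis .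
qed

theorem proposition4p4:
  fixes m n t :: nat and c :: "nat multiset \<Rightarrow> real" and A :: "nat \<Rightarrow> real mat"
  assumes "m > 0" and "n > 0" and "t > 0"
    and "is_form n t c"
    and "\<And>i. i < n \<Longrightarrow> A i \<in> carrier_mat m m"
    and "\<And>i. i < n \<Longrightarrow> contraction (A i)"
    and "\<And>i j. i < n \<Longrightarrow> j < n \<Longrightarrow> A i * A j = A j * A i"
  shows "form_cb_norm n t c \<ge>
           opnorm (tensor_eval n t m (form_tensor c) (\<lambda>_ i. A i))"
  unfolding form_cb_norm_def
proof (rule cInf_greatest)
  show "{\<Sum>\<sigma>\<in>{\<sigma>. \<sigma> permutes {..<t}}. cb_norm n t (Ts \<sigma>) | Ts. \<forall>is\<in>index_tuples n t.
      form_tensor c is = (\<Sum>\<sigma>\<in>{\<sigma>. \<sigma> permutes {..<t}}. tensor_perm (Ts \<sigma>) \<sigma> is)} \<noteq> {}"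
    using form_tensor_decomposition_exists by blast
qed (use opnorm_tensor_eval_le_decomposition assms(1,5-7) in blast)

end
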